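(* Let $n$ be a positive integer, let $\mathcal F$ be an $\mathcal N$-saturated family of subsets of $[n]$, and let $\mathcal G$ be a component of $\mathcal F$. Let $B_1,\dots,B_l$ be the minimal elements and $A_1,\dots,A_k$ the maximal elements of $\mathcal G$. Let $M\in\mathcal F$ be such that $\bigcup_{i=1}^l B_i\subseteq M\subseteq\bigcap_{i=1}^k A_i$, and such that $M$ is minimal (with respect to inclusion) among the sets of $\mathcal F$ with this property. Then every $X\in\mathcal G$ is comparable to $M$.
   Context: The poset $\mathcal N$ has four elements $a,b,c,d$ with $a<c$, $b<c$, $b<d$ and no other comparabilities. A family $\mathcal Q$ of sets (ordered by inclusion) contains an induced copy of $\mathcal N$ if there are distinct sets in $\mathcal Q$ whose inclusion relations are exactly those of $a,b,c,d$ above. A family $\mathcal F$ of subsets of $[n]=\{1,\dots,n\}$ is $\mathcal N$-saturated if $\mathcal F$ contains no induced copy of $\mathcal N$, but for every $S\subseteq[n]$ with $S\notin\mathcal F$, the family $\mathcal F\cup\{S\}$ contains an induced copy of $\mathcal N$. A component of $\mathcal F$ is the vertex set of a connected component of the Hasse diagram (as a graph) of the poset $(\mathcal F\setminus\{\emptyset,[n]\},\subseteq)$; its minimal and maximal elements are taken with respect to inclusion within the component. *)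

theory Defs
  imports Main
begin

definition induced_N :: "nat set set \<Rightarrow> bool" where
  "induced_N Q \<longleftrightarrow> (\<exists>a\<in>Q. \<exists>b\<in>Q. \<exists>c\<in>Q. \<exists>d\<in>Q.
      distinct [a, b, c, d] \<and>
      a \<subset> c \<and> b \<subset> c \<and> b \<subset> d \<and>
      \<not> a \<subseteq> b \<and> \<not> b \<subseteq> a \<and>
      \<not> a \<subseteq> d \<and> \<not> d \<subseteq> a \<and>
      \<not> c \<subseteq> d \<and> \<not> d \<subseteq> c)"

definition N_saturated :: "nat \<Rightarrow> nat set set \<Rightarrow> bool" where
  "N_saturated n F \<longleftrightarrow> F \<subseteq> Pow {1..n} \<and> \<not> induced_N F \<and>
     (\<forall>S. S \<subseteq> {1..n} \<longrightarrow> S \<notin> F \<longrightarrow> induced_N (F \<union> {S}))"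

definition inner_part :: "nat \<Rightarrow> nat set set \<Rightarrow> nat set set" where
  "inner_part n F = F - {{}, {1..n}}"

definition covers :: "nat set set \<Rightarrow> nat set \<Rightarrow> nat set \<Rightarrow> bool" where
  "covers P X Y \<longleftrightarrow> X \<in> P \<and> Y \<in> P \<and> X \<subset> Y \<and> \<not> (\<exists>Z\<in>P. X \<subset> Z \<and> Z \<subset> Y)"

definition hasse_adj :: "nat set set \<Rightarrow> nat set \<Rightarrow> nat set \<Rightarrow> bool" where
  "hasse_adj P X Y \<longleftrightarrow> covers P X Y \<or> covers P Y X"

definition is_component :: "nat \<Rightarrow> nat set set \<Rightarrow> nat set set \<Rightarrow> bool" where
  "is_component n F G \<longleftrightarrow> (\<exists>X\<in>inner_part n F.
     G = {Y. Y \<in> inner_part n F \<and> (hasse_adj (inner_part n F))\<^sup>*\<^sup>* X Y})"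

definition minimal_elems :: "nat set set \<Rightarrow> nat set set" where
  "minimal_elems G = {B\<in>G. \<not> (\<exists>B'\<in>G. B' \<subset> B)}"

definition maximal_elems :: "nat set set \<Rightarrow> nat set set" where
  "maximal_elems G = {A\<in>G. \<not> (\<exists>A'\<in>G. A \<subset> A')}"

end

(* Suppose some X in G is incomparable to M. Each such set contains all minimal elements of G,
   and each member of G strictly below M lies below each such set: otherwise two minimal elements
   (respectively a member below M and a minimal element), M and the incomparable set form an
   induced N. So S, the intersection of M with all members of G incomparable to M, lies strictly
   below M and above all minimal elements, hence S is not in F by the minimality of M, and S is
   comparable to every member of G. By saturation, adding S to F creates an induced N, necessarily
   through S. A set of F other than the empty set and [n] that is comparable to a member of G or
   to S belongs to G, and the comparability graph of N is connected, so all of N lies in G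
   together with S. But S is comparable to all of G, whereas in N it is incomparable to some
   other element. *)

theory Submission
  imports Defs
begin

abbreviation incomparable :: "'a set \<Rightarrow> 'a set \<Rightarrow> bool" where
  "incomparable X Y \<equiv> \<not> X \<subseteq> Y \<and> \<not> Y \<subseteq> X"

definition N_shape :: "'a set \<Rightarrow> 'a set \<Rightarrow> 'a set \<Rightarrow> 'a set \<Rightarrow> bool" where
  "N_shape a b c d \<longleftrightarrow> a \<subset> c \<and> b \<subset> c \<and> b \<subset> d \<and>
     incomparable a b \<and> incomparable a d \<and> incomparable c d"

lemma induced_N_iff_N_shape:
  "induced_N Q \<longleftrightarrow> (\<exists>a\<in>Q. \<exists>b\<in>Q. \<exists>c\<in>Q. \<exists>d\<in>Q. N_shape a b c d)"
proof
  assume "induced_N Q"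
  then show "\<exists>a\<in>Q. \<exists>b\<in>Q. \<exists>c\<in>Q. \<exists>d\<in>Q. N_shape a b c d"
    unfolding induced_N_def N_shape_def by blast
next
  assume "\<exists>a\<in>Q. \<exists>b\<in>Q. \<exists>c\<in>Q. \<exists>d\<in>Q. N_shape a b c d"
  then obtain a b c d where "{a, b, c, d} \<subseteq> Q" "N_shape a b c d"
    by blast
  moreover from this(2) have "distinct [a, b, c, d]"
    unfolding N_shape_def by auto
  ultimately show "induced_N Q"
    unfolding induced_N_def N_shape_def by blast
qed

lemma N_shape_incomparable_partner:
  assumes "N_shape a b c d" "x \<in> {a, b, c, d}"
  shows "\<exists>y\<in>{a, b, c, d}. incomparable x y"
proof -
  have "incomparable a b" "incomparable c d"
    using assms(1) unfolding N_shape_def by simp_all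
  then show ?thesis
    using assms(2) by auto
qed

lemma N_shape_subset_inner_part:
  assumes "N_shape a b c d" "{a, b, c, d} \<subseteq> Q" "Q \<subseteq> Pow {1..n}"
  shows "{a, b, c, d} \<subseteq> inner_part n Q"
proof
  fix x assume x: "x \<in> {a, b, c, d}"
  obtain y where y: "y \<in> {a, b, c, d}" "incomparable x y"
    using N_shape_incomparable_partner[OF assms(1) x] by (elim bexE)
  have "x \<in> Q" "y \<subseteq> {1..n}"
    using x y(1) assms(2,3) by (auto dest: subsetD)
  then show "x \<in> inner_part n Q"
    using y(2) unfolding inner_part_def by auto
qed

lemma N_shape_connected:
  assumes "N_shape a b c d"
    and "\<And>x y. x \<in> {a, b, c, d} \<Longrightarrow> y \<in> {a, b, c, d} \<Longrightarrow> x \<subseteq> y \<Longrightarrow> P x \<longleftrightarrow> P y"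
    and "x \<in> {a, b, c, d}" "y \<in> {a, b, c, d}"
  shows "P x \<longleftrightarrow> P y"
proof -
  have "P a \<longleftrightarrow> P c" "P b \<longleftrightarrow> P c" "P b \<longleftrightarrow> P d"
    using assms(1,2) unfolding N_shape_def by blast+
  then show ?thesis
    using assms(3,4) by blast
qed

lemma hasse_adj_eq_symclp: "hasse_adj P = symclp (covers P)"
  unfolding hasse_adj_def symclp_def by (intro ext) (rule refl)

lemma subset_imp_hasse_connected:
  assumes "finite P" "W \<in> P" "Z \<in> P" "W \<subseteq> Z"
  shows "(hasse_adj P)\<^sup>*\<^sup>* W Z"
  using assms(2-)
proof (induction "card {V\<in>P. W \<subset> V \<and> V \<subseteq> Z}" arbitrary: W rule: less_induct)
  case less
  let ?between = "\<lambda>W. {V\<in>P. W \<subset> V \<and> V \<subseteq> Z}"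
  show ?case
  proof (cases "W = Z")
    case False
    have "Z \<in> ?between W" "finite (?between W)"
      using less.prems False assms(1) by auto
    then obtain V where V: "V \<in> P" "W \<subset> V" "V \<subseteq> Z"
      and V_min: "\<And>U. U \<in> ?between W \<Longrightarrow> U \<subseteq> V \<Longrightarrow> V = U"
      using finite_has_minimal2[of "?between W" Z] by auto
    have "\<not> (\<exists>U\<in>P. W \<subset> U \<and> U \<subset> V)"
      using V_min V(3) by fastforce
    then have "hasse_adj P W V"
      unfolding hasse_adj_def covers_def using less.prems(1) V by simp
    moreover have "?between V \<subset> ?between W"
      using V by auto
    then have "card (?between V) < card (?between W)"
      using assms(1) by (intro psubset_card_mono) auto
    then have "(hasse_adj P)\<^sup>*\<^sup>* V Z"
      using less.hyps V less.prems(2) by blast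
    ultimately show ?thesis
      by (rule converse_rtranclp_into_rtranclp)
  qed simp
qed

lemma component_subset_inner_part: "is_component n F G \<Longrightarrow> G \<subseteq> inner_part n F"
  unfolding is_component_def by blast

lemma component_comparable_closed:
  assumes "is_component n F G" "finite F" "Z \<in> G" "W \<in> inner_part n F" "W \<subseteq> Z \<or> Z \<subseteq> W"
  shows "W \<in> G"
proof -
  let ?P = "inner_part n F"
  obtain X where G: "G = {Y \<in> ?P. (hasse_adj ?P)\<^sup>*\<^sup>* X Y}"
    using assms(1) unfolding is_component_def by blast
  have Z: "Z \<in> ?P" "(hasse_adj ?P)\<^sup>*\<^sup>* X Z"
    using assms(3) unfolding G by simp_all
  have "finite ?P"
    using assms(2) unfolding inner_part_def by simp
  have "(hasse_adj ?P)\<^sup>*\<^sup>* Z W"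
  proof (cases "Z \<subseteq> W")
    case True
    then show ?thesis
      by (rule subset_imp_hasse_connected[OF \<open>finite ?P\<close> Z(1) assms(4)])
  next
    case False
    then have "(hasse_adj ?P)\<^sup>*\<^sup>* W Z"
      using subset_imp_hasse_connected[OF \<open>finite ?P\<close> assms(4) Z(1)] assms(5) by simp
    then show ?thesis
      unfolding hasse_adj_eq_symclp by (rule rtranclp_symclp_sym)
  qed
  with Z(2) have "(hasse_adj ?P)\<^sup>*\<^sup>* X W"
    by (rule rtranclp_trans)
  then show ?thesis
    unfolding G using assms(4) by simp
qed

lemma minimal_elem_below:
  assumes "finite G" "Z \<in> G"
  shows "\<exists>B\<in>minimal_elems G. B \<subseteq> Z"
  using finite_has_minimal2[OF assms] unfolding minimal_elems_def by blast

lemma minimal_elemsD: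
  assumes "B \<in> minimal_elems G"
  shows "B \<in> G" and "\<And>W. W \<in> G \<Longrightarrow> W \<subseteq> B \<Longrightarrow> W = B"
  using assms unfolding minimal_elems_def by blast+

locale N_free_middle =
  fixes F G :: "nat set set" and M :: "nat set"
  assumes N_free: "\<not> induced_N F"
    and G_subset: "G \<subseteq> F"
    and finite_G: "finite G"
    and M_in: "M \<in> F"
    and minimals_below_M: "\<Union> (minimal_elems G) \<subseteq> M"
    and M_below_maximals: "M \<subseteq> \<Inter> (maximal_elems G)"
    and M_minimal: "\<And>M'. M' \<in> F \<Longrightarrow> \<Union> (minimal_elems G) \<subseteq> M' \<Longrightarrow>
      M' \<subseteq> \<Inter> (maximal_elems G) \<Longrightarrow> \<not> M' \<subset> M"
begin

lemma not_N_shape: "a \<in> F \<Longrightarrow> b \<in> F \<Longrightarrow> c \<in> F \<Longrightarrow> d \<in> F \<Longrightarrow> \<not> N_shape a b c d"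
  using N_free unfolding induced_N_iff_N_shape by blast

lemma incomparable_contains_minimals:
  assumes Z: "Z \<in> G" "incomparable Z M"
  shows "\<Union> (minimal_elems G) \<subseteq> Z"
proof
  fix x assume "x \<in> \<Union> (minimal_elems G)"
  then obtain B1 where B1: "B1 \<in> minimal_elems G" "x \<in> B1"
    by blast
  obtain B0 where B0: "B0 \<in> minimal_elems G" "B0 \<subseteq> Z"
    using minimal_elem_below[OF finite_G Z(1)] by blast
  show "x \<in> Z"
  proof (rule ccontr)
    assume "x \<notin> Z"
    then have "\<not> B0 \<subseteq> B1"
      using minimal_elemsD[OF B1(1)] minimal_elemsD(1)[OF B0(1)] B0(2) B1(2) by blast
    then have "N_shape B1 B0 M Z"
      unfolding N_shape_def using B0 B1 Z \<open>x \<notin> Z\<close> minimals_below_M by blast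
    then show False
      using not_N_shape B0 B1 Z M_in G_subset minimal_elemsD(1) by blast
  qed
qed

lemma below_M_subset_incomparable:
  assumes W: "W \<in> G" "W \<subset> M" and Z: "Z \<in> G" "incomparable Z M"
  shows "W \<subseteq> Z"
proof (rule ccontr)
  assume "\<not> W \<subseteq> Z"
  have "\<not> \<Union> (minimal_elems G) \<subseteq> W"
    using M_minimal[of W] W G_subset M_below_maximals by blast
  then obtain B where B: "B \<in> minimal_elems G" "\<not> B \<subseteq> W"
    by blast
  have "B \<subseteq> Z"
    using incomparable_contains_minimals[OF Z] B(1) by blast
  moreover have "\<not> W \<subseteq> B"
    using minimal_elemsD(2)[OF B(1) W(1)] B(2) by blast
  ultimately have "N_shape W B M Z"
    unfolding N_shape_def using B W Z \<open>\<not> W \<subseteq> Z\<close> minimals_below_M by blast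
  then show False
    using not_N_shape B W Z M_in G_subset minimal_elemsD(1) by blast
qed

definition core :: "nat set" where
  "core = M \<inter> \<Inter> {Z\<in>G. incomparable Z M}"

lemma core_subset_M: "core \<subseteq> M"
  unfolding core_def by blast

lemma core_subset_incomparable: "Z \<in> G \<Longrightarrow> incomparable Z M \<Longrightarrow> core \<subseteq> Z"
  unfolding core_def by blast

lemma minimals_subset_core: "\<Union> (minimal_elems G) \<subseteq> core"
  unfolding core_def using minimals_below_M incomparable_contains_minimals by blast

lemma core_comparable:
  assumes "Z \<in> G"
  shows "Z \<subseteq> core \<or> core \<subseteq> Z"
proof (cases "Z \<subset> M")
  case True
  then show ?thesis
    unfolding core_def using below_M_subset_incomparable[OF assms True] by blast
next
  case False
  then show ?thesis
    using assms core_subset_M core_subset_incomparable by blast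
qed

lemma core_notin:
  assumes "X \<in> G" "incomparable X M"
  shows "core \<notin> F"
proof
  assume "core \<in> F"
  moreover have "core \<subset> M"
    using core_subset_M core_subset_incomparable[OF assms] assms(2) by blast
  ultimately show False
    using M_minimal minimals_subset_core M_below_maximals by blast
qed

end

locale saturated_component_middle =
  fixes n :: nat and F G :: "nat set set" and M :: "nat set"
  assumes saturated: "N_saturated n F"
    and component: "is_component n F G"
    and M_in: "M \<in> F"
    and minimals_below_M: "\<Union> (minimal_elems G) \<subseteq> M"
    and M_below_maximals: "M \<subseteq> \<Inter> (maximal_elems G)"
    and M_minimal: "\<And>M'. M' \<in> F \<Longrightarrow> \<Union> (minimal_elems G) \<subseteq> M' \<Longrightarrow>
      M' \<subseteq> \<Inter> (maximal_elems G) \<Longrightarrow> \<not> M' \<subset> M"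
begin

lemma F_subset: "F \<subseteq> Pow {1..n}"
  using saturated unfolding N_saturated_def by blast

lemma finite_F: "finite F"
  using F_subset by (rule finite_subset) simp

lemma G_subset_inner_part: "G \<subseteq> inner_part n F"
  using component by (rule component_subset_inner_part)

sublocale N_free_middle F G M
proof
  show "G \<subseteq> F"
    using G_subset_inner_part unfolding inner_part_def by blast
  then show "finite G"
    using finite_F by (rule finite_subset)
qed (use saturated M_in minimals_below_M M_below_maximals M_minimal in
      \<open>auto simp: N_saturated_def\<close>)

context
  fixes X assumes X: "X \<in> G" "incomparable X M"
begin

lemma core_component_closed:
  assumes "x \<in> inner_part n (insert core F)" "y \<in> inner_part n (insert core F)" "x \<subseteq> y"
  shows "x \<in> insert core G \<longleftrightarrow> y \<in> insert core G"
proof -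
  obtain B where B: "B \<in> G" "B \<subseteq> core"
    using minimal_elem_below[OF finite_G X(1)] minimal_elemsD(1) minimals_subset_core by blast
  have closed: "W \<in> G" if "W \<in> inner_part n F" "Z \<in> G" "W \<subseteq> Z \<or> Z \<subseteq> W" for W Z
    using component_comparable_closed[OF component finite_F that(2,1,3)] .
  have "core \<subseteq> X"
    using core_subset_incomparable[OF X] .
  show ?thesis
    using assms closed[of x X] closed[of y B] closed[of x y] closed[of y x] B \<open>core \<subseteq> X\<close> X(1)
    unfolding inner_part_def by blast
qed

lemma incomparable_to_M_absurd: False
proof -
  have "M \<subseteq> {1..n}"
    using M_in F_subset by blast
  then have core_sub: "core \<subseteq> {1..n}"
    using core_subset_M by (rule subset_trans[rotated])
  then have "induced_N (insert core F)"
    using saturated core_notin[OF X] unfolding N_saturated_def by simp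
  then obtain a b c d where abcd: "{a, b, c, d} \<subseteq> insert core F" and N: "N_shape a b c d"
    unfolding induced_N_iff_N_shape by auto
  have core_in: "core \<in> {a, b, c, d}"
    using abcd N not_N_shape[of a b c d] by auto
  have "insert core F \<subseteq> Pow {1..n}"
    using core_sub F_subset by simp
  then have inner: "{a, b, c, d} \<subseteq> inner_part n (insert core F)"
    by (rule N_shape_subset_inner_part[OF N abcd])
  have closed: "x \<in> insert core G \<longleftrightarrow> y \<in> insert core G"
    if "x \<in> {a, b, c, d}" "y \<in> {a, b, c, d}" "x \<subseteq> y" for x y
    using that inner by (intro core_component_closed) auto
  obtain y where y: "y \<in> {a, b, c, d}" "incomparable core y"
    using N_shape_incomparable_partner[OF N core_in] by (elim bexE)
  have "y \<in> insert core G"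
    using N_shape_connected[where P = "\<lambda>x. x \<in> insert core G", OF N closed y(1) core_in] by simp
  moreover have "y \<noteq> core"
    using y(2) by blast
  ultimately have "y \<in> G"
    by simp
  then show False
    using core_comparable y(2) by blast
qed

end

lemma comparable_to_M: "Z \<in> G \<Longrightarrow> Z \<subseteq> M \<or> M \<subseteq> Z"
  using incomparable_to_M_absurd by blast

end

theorem lemma2p5:
  fixes n :: nat and F G :: "nat set set" and M :: "nat set"
  assumes "n \<ge> 1"
    and "N_saturated n F"
    and "is_component n F G"
    and "M \<in> F"
    and "\<Union> (minimal_elems G) \<subseteq> M" and "M \<subseteq> \<Inter> (maximal_elems G)"
    and "\<forall>M'\<in>F. \<Union> (minimal_elems G) \<subseteq> M' \<and> M' \<subseteq> \<Inter> (maximal_elems G)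
                  \<longrightarrow> \<not> M' \<subset> M"
  shows "\<forall>X\<in>G. X \<subseteq> M \<or> M \<subseteq> X"
proof -
  interpret saturated_component_middle n F G M
    using assms(2-) by unfold_locales blast+
  show ?thesis
    using comparable_to_M by blast
qed

end
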